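(* For all $(n,k),(p,q)\in\mathcal{I}$, $$S^{n,k}_{p,q}=\int_0^1\Big(\phi^\alpha_{n,k}(t)+\frac{\alpha(t)-\beta(t)}{\sqrt{\Gamma(t)}}\psi^\alpha_{n,k}(t)\Big)\Big(\phi^\alpha_{p,q}(t)+\frac{\alpha(t)-\beta(t)}{\sqrt{\Gamma(t)}}\psi^\alpha_{p,q}(t)\Big)\,dt.$$
   Context: One-dimensional setting. Let $\alpha,\beta:[0,1]\to\mathbb{R}$ and $\sqrt{\Gamma}:[0,1]\to(0,\infty)$ be H\"older continuous, $\Gamma=(\sqrt{\Gamma})^2$. For $\gamma\in\{\alpha,\beta\}$ (corresponding to the process $dX_t=\gamma(t)X_tdt+\sqrt{\Gamma(t)}dW_t$, $X_0=0$) let $g_\gamma(t)=\exp(\int_0^t\gamma)$, $f_\gamma(t)=\sqrt{\Gamma(t)}\exp(-\int_0^t\gamma)$, $h_\gamma(t)=\int_0^tf_\gamma(s)^2ds$, $h_\gamma(s,t)=h_\gamma(t)-h_\gamma(s)$. $\mathcal{I}=\{(0,0)\}\cup\{(n,k):n\ge1,\ 0\le k<2^{n-1}\}$. Partition: fix $\rho\in(0,1)$ and reals $l_{n,k}<m_{n,k}<r_{n,k}$ ($n\ge1$) with $l_{1,0}=0$, $r_{1,0}=1$, $l_{n+1,2k}=l_{n,k}$, $r_{n+1,2k}=l_{n+1,2k+1}=m_{n,k}$, $r_{n+1,2k+1}=r_{n,k}$, $\max(r_{n,k}-m_{n,k},m_{n,k}-l_{n,k})<\rho(r_{n,k}-l_{n,k})$.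 For $n\ge1$, writing $l,m,r$ for $l_{n,k},m_{n,k},r_{n,k}$: $\sigma^\gamma_{n,k}=g_\gamma(m)\sqrt{h_\gamma(l,m)h_\gamma(m,r)/h_\gamma(l,r)}$, $L^\gamma_{n,k}=\sigma^\gamma_{n,k}/(g_\gamma(m)h_\gamma(l,m))$, $R^\gamma_{n,k}=\sigma^\gamma_{n,k}/(g_\gamma(m)h_\gamma(m,r))$, $M^\gamma_{n,k}=g_\gamma(m)/\sigma^\gamma_{n,k}$, and $\psi^\gamma_{n,k}(t)=g_\gamma(t)h_\gamma(l,t)L^\gamma_{n,k}$ on $[l,m]$, $g_\gamma(t)h_\gamma(t,r)R^\gamma_{n,k}$ on $[m,r]$, $0$ elsewhere. Also $\sigma^\gamma_{0,0}=g_\gamma(1)\sqrt{h_\gamma(0,1)}$, $L^\gamma_{0,0}=\sigma^\gamma_{0,0}/(g_\gamma(1)h_\gamma(0,1))$, $\psi^\gamma_{0,0}(t)=g_\gamma(t)h_\gamma(0,t)L^\gamma_{0,0}$. Let $\phi^\gamma_{n,k}(t)=\frac{1}{f_\gamma(t)}\frac{d}{dt}\big(\psi^\gamma_{n,k}(t)/g_\gamma(t)\big)$ (defined except at finitely many points). For continuous $x$: $\Delta^\gamma_{n,k}(x)=M^\gamma_{n,k}x(m)/g_\gamma(m)-L^\gamma_{n,k}x(l)/g_\gamma(l)-R^\gamma_{n,k}x(r)/g_\gamma(r)$ ($n\ge1$), $\Delta^\gamma_{0,0}(x)=L^\gamma_{0,0}x(1)/g_\gamma(1)$. Let $G^{i,j}_{n,k}=\Delta^\beta_{i,j}(\psi^\alpha_{n,k})$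 (the matrix of the coefficient lift operator mapping coefficients of the $\alpha$-process to those of the $\beta$-process) and $S^{n,k}_{p,q}=\sum_{(i,j)\in\mathcal{I}}G^{i,j}_{n,k}G^{i,j}_{p,q}$ (the matrix of $G^TG$). *)

theory Defs
  imports "HOL-Analysis.Analysis"
begin

definition holder01 :: "(real \<Rightarrow> real) \<Rightarrow> bool" where
  "holder01 f \<longleftrightarrow> (\<exists>C a. 0 < a \<and> a \<le> 1 \<and>
      (\<forall>x\<in>{0..1}. \<forall>y\<in>{0..1}. \<bar>f x - f y\<bar> \<le> C * \<bar>x - y\<bar> powr a))"

definition nested_partition ::
  "real \<Rightarrow> (nat \<Rightarrow> nat \<Rightarrow> real) \<Rightarrow> (nat \<Rightarrow> nat \<Rightarrow> real) \<Rightarrow> (nat \<Rightarrow> nat \<Rightarrow> real) \<Rightarrow> bool" where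
  "nested_partition \<rho> l m r \<longleftrightarrow> 0 < \<rho> \<and> \<rho> < 1 \<and> l 1 0 = 0 \<and> r 1 0 = 1 \<and>
     (\<forall>n k. 1 \<le> n \<longrightarrow> k < 2^(n-1) \<longrightarrow>
        l n k < m n k \<and> m n k < r n k \<and>
        max (r n k - m n k) (m n k - l n k) < \<rho> * (r n k - l n k) \<and>
        l (n+1) (2*k) = l n k \<and> r (n+1) (2*k) = m n k \<and>
        l (n+1) (2*k+1) = m n k \<and> r (n+1) (2*k+1) = r n k)"

definition idx :: "(nat \<times> nat) set" where
  "idx = {(0,0)} \<union> {(n,k). 1 \<le> n \<and> k < 2^(n-1)}"

text \<open>sG is sqrt Gamma, c is the drift gamma.\<close>
definition gf :: "(real \<Rightarrow> real) \<Rightarrow> real \<Rightarrow> real" where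
  "gf c t = exp (integral {0..t} c)"

definition ff :: "(real \<Rightarrow> real) \<Rightarrow> (real \<Rightarrow> real) \<Rightarrow> real \<Rightarrow> real" where
  "ff sG c t = sG t * exp (- integral {0..t} c)"

definition hf :: "(real \<Rightarrow> real) \<Rightarrow> (real \<Rightarrow> real) \<Rightarrow> real \<Rightarrow> real" where
  "hf sG c t = integral {0..t} (\<lambda>s. (ff sG c s)^2)"

definition hh :: "(real \<Rightarrow> real) \<Rightarrow> (real \<Rightarrow> real) \<Rightarrow> real \<Rightarrow> real \<Rightarrow> real" where
  "hh sG c s t = hf sG c t - hf sG c s"

type_synonym part = "nat \<Rightarrow> nat \<Rightarrow> real"

definition sig :: "(real \<Rightarrow> real) \<Rightarrow> (real \<Rightarrow> real) \<Rightarrow> part \<Rightarrow> part \<Rightarrow> part \<Rightarrow> nat \<times> nat \<Rightarrow> real" where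
  "sig sG c l m r nk = (case nk of (n,k) \<Rightarrow>
     if n = 0 then gf c 1 * sqrt (hh sG c 0 1)
     else gf c (m n k) * sqrt (hh sG c (l n k) (m n k) * hh sG c (m n k) (r n k)
                               / hh sG c (l n k) (r n k)))"

definition Lc :: "(real \<Rightarrow> real) \<Rightarrow> (real \<Rightarrow> real) \<Rightarrow> part \<Rightarrow> part \<Rightarrow> part \<Rightarrow> nat \<times> nat \<Rightarrow> real" where
  "Lc sG c l m r nk = (case nk of (n,k) \<Rightarrow>
     if n = 0 then sig sG c l m r nk / (gf c 1 * hh sG c 0 1)
     else sig sG c l m r nk / (gf c (m n k) * hh sG c (l n k) (m n k)))"

definition Rc :: "(real \<Rightarrow> real) \<Rightarrow> (real \<Rightarrow> real) \<Rightarrow> part \<Rightarrow> part \<Rightarrow> part \<Rightarrow> nat \<times> nat \<Rightarrow> real" where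
  "Rc sG c l m r nk = (case nk of (n,k) \<Rightarrow>
     sig sG c l m r nk / (gf c (m n k) * hh sG c (m n k) (r n k)))"

definition Mc :: "(real \<Rightarrow> real) \<Rightarrow> (real \<Rightarrow> real) \<Rightarrow> part \<Rightarrow> part \<Rightarrow> part \<Rightarrow> nat \<times> nat \<Rightarrow> real" where
  "Mc sG c l m r nk = (case nk of (n,k) \<Rightarrow> gf c (m n k) / sig sG c l m r nk)"

definition psi :: "(real \<Rightarrow> real) \<Rightarrow> (real \<Rightarrow> real) \<Rightarrow> part \<Rightarrow> part \<Rightarrow> part \<Rightarrow> nat \<times> nat \<Rightarrow> real \<Rightarrow> real" where
  "psi sG c l m r nk t = (case nk of (n,k) \<Rightarrow>
     if n = 0 then gf c t * hh sG c 0 t * Lc sG c l m r nk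
     else if l n k \<le> t \<and> t \<le> m n k then gf c t * hh sG c (l n k) t * Lc sG c l m r nk
     else if m n k \<le> t \<and> t \<le> r n k then gf c t * hh sG c t (r n k) * Rc sG c l m r nk
     else 0)"

text \<open>phi: the derivative exists except at finitely many points (where the
  value of deriv is irrelevant for the integral).\<close>
definition phi :: "(real \<Rightarrow> real) \<Rightarrow> (real \<Rightarrow> real) \<Rightarrow> part \<Rightarrow> part \<Rightarrow> part \<Rightarrow> nat \<times> nat \<Rightarrow> real \<Rightarrow> real" where
  "phi sG c l m r nk t = (1 / ff sG c t) * deriv (\<lambda>s. psi sG c l m r nk s / gf c s) t"

definition Delta :: "(real \<Rightarrow> real) \<Rightarrow> (real \<Rightarrow> real) \<Rightarrow> part \<Rightarrow> part \<Rightarrow> part \<Rightarrow> nat \<times> nat \<Rightarrow> (real \<Rightarrow> real) \<Rightarrow> real" where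
  "Delta sG c l m r nk x = (case nk of (n,k) \<Rightarrow>
     if n = 0 then Lc sG c l m r nk * x 1 / gf c 1
     else Mc sG c l m r nk * x (m n k) / gf c (m n k)
        - Lc sG c l m r nk * x (l n k) / gf c (l n k)
        - Rc sG c l m r nk * x (r n k) / gf c (r n k))"

definition Gm :: "(real \<Rightarrow> real) \<Rightarrow> (real \<Rightarrow> real) \<Rightarrow> (real \<Rightarrow> real) \<Rightarrow> part \<Rightarrow> part \<Rightarrow> part
    \<Rightarrow> nat \<times> nat \<Rightarrow> nat \<times> nat \<Rightarrow> real" where
  "Gm sG a b l m r ij nk = Delta sG b l m r ij (psi sG a l m r nk)"

end

theory Submission
  imports Defs
begin

text \<open>
  The three-point identity at a node telescopes: the sum of
  \<open>\<Delta>\<^sup>\<beta>\<^sub>i\<^sub>j(x) \<Delta>\<^sup>\<beta>\<^sub>i\<^sub>j(y)\<close> over the levels up to \<open>N\<close> equals the sum, over the tiles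
  \<open>[a,b]\<close> of level \<open>N\<close>, of \<open>X(a,b) Y(a,b) / h\<^sub>\<beta>(a,b)\<close>, where \<open>X(a,b)\<close> is the increment
  of \<open>x/g\<^sub>\<beta>\<close>. For \<open>x = \<psi>\<^sup>\<alpha>\<^sub>n\<^sub>k\<close> and tiles finer than its breakpoints, \<open>x/g\<^sub>\<beta>\<close> is smooth
  on each tile with derivative \<open>f\<^sub>\<beta>\<^sup>2 w\<close>, where \<open>w = u/f\<^sub>\<beta>\<close> and \<open>u\<close> is the integrand
  \<open>\<phi>\<^sup>\<alpha>\<^sub>n\<^sub>k + (\<alpha> - \<beta>) \<psi>\<^sup>\<alpha>\<^sub>n\<^sub>k / \<surd>\<Gamma>\<close>. Since also \<open>h\<^sub>\<beta>(a,b) = \<integral>\<^sub>a\<^sup>b f\<^sub>\<beta>\<^sup>2\<close>, each summand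
  is a ratio \<open>(\<integral> f\<^sub>\<beta>\<^sup>2 w)(\<integral> f\<^sub>\<beta>\<^sup>2 z) / \<integral> f\<^sub>\<beta>\<^sup>2\<close>, which differs from \<open>\<integral> f\<^sub>\<beta>\<^sup>2 w z\<close> by
  the oscillation of \<open>w\<close> and \<open>z\<close> on the tile times \<open>\<integral> f\<^sub>\<beta>\<^sup>2\<close>. The tiles shrink like \<open>\<rho>\<^sup>N\<close>
  and \<open>w\<close> coincides on each fine tile with one of finitely many continuous functions, so
  the partial sums converge to \<open>\<integral>\<^sub>0\<^sup>1 u\<^sub>n\<^sub>k u\<^sub>p\<^sub>q\<close>. Convergence of the diagonal partial sums
  bounds them, which makes the products absolutely summable over the index set.
\<close>

lemma sum_lessThan_double:
  fixes g :: "nat \<Rightarrow> 'a::comm_monoid_add"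
  shows "(\<Sum>k<2*n. g k) = (\<Sum>j<n. g (2*j) + g (2*j+1))"
  by (induction n) (auto simp: add.assoc)

lemma three_point_product_identity:
  fixes h1 h2 w A B C A' B' C' :: real
  assumes "h1 > 0" "h2 > 0" "w > 0" "w^2 = h1*h2/(h1+h2)"
  shows "(B/w - w*A/h1 - w*C/h2) * (B'/w - w*A'/h1 - w*C'/h2)
     = (B-A)*(B'-A')/h1 + (C-B)*(C'-B')/h2 - (C-A)*(C'-A')/(h1+h2)"
proof -
  have ww: "w*w = h1*h2/(h1+h2)" using assms(4) by (simp add: power2_eq_square)
  have "(B/w - w*A/h1 - w*C/h2) * (B'/w - w*A'/h1 - w*C'/h2)
      = B*B'/(w*w) - B*(A'/h1 + C'/h2) - B'*(A/h1 + C/h2) + (w*w)*(A/h1 + C/h2)*(A'/h1 + C'/h2)"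
    using assms by (simp add: field_simps)
  also have "\<dots> = (B-A)*(B'-A')/h1 + (C-B)*(C'-B')/h2 - (C-A)*(C'-A')/(h1+h2)"
    unfolding ww using assms(1,2) add_pos_pos[OF assms(1,2)]
    by (simp add: divide_simps) (simp add: algebra_simps power2_eq_square)
  finally show ?thesis .
qed

lemma holder01_imp_continuous_on:
  assumes "holder01 f"
  shows "continuous_on {0..1} f"
proof -
  obtain C a where Ca: "0 < a" "\<forall>x\<in>{0..1}. \<forall>y\<in>{0..1}. \<bar>f x - f y\<bar> \<le> C * \<bar>x - y\<bar> powr a"
    using assms unfolding holder01_def by blast
  show ?thesis unfolding continuous_on_iff
  proof (intro ballI allI impI)
    fix x e :: real assume x: "x \<in> {0..1}" and e: "0 < e"
    define d where "d = (e / (\<bar>C\<bar> + 1)) powr (1/a)"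
    show "\<exists>d>0. \<forall>y\<in>{0..1}. dist y x < d \<longrightarrow> dist (f y) (f x) < e"
    proof (intro exI[of _ d] conjI ballI impI)
      show "d > 0" unfolding d_def using e by simp
      fix y assume y: "y \<in> {0..1}" and dy: "dist y x < d"
      have "\<bar>y - x\<bar> powr a < d powr a"
        using dy Ca(1) by (intro powr_less_mono2) (auto simp: dist_real_def)
      also have "d powr a = e / (\<bar>C\<bar> + 1)"
        unfolding d_def using e Ca(1) by (simp add: powr_powr)
      finally have "(\<bar>C\<bar> + 1) * \<bar>y - x\<bar> powr a < e"
        by (simp add: field_simps add_nonneg_pos)
      moreover have "\<bar>f y - f x\<bar> \<le> (\<bar>C\<bar> + 1) * \<bar>y - x\<bar> powr a"
        using Ca(2) x y by (smt (verit, best) mult_right_mono powr_ge_zero)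
      ultimately show "dist (f y) (f x) < e" by (simp add: dist_real_def)
    qed
  qed
qed

lemma continuous_on_integral_upper_limit:
  "continuous_on {0..1} (c::real \<Rightarrow> real) \<Longrightarrow> continuous_on {0..1} (\<lambda>s. integral {0..s} c)"
  by (rule indefinite_integral_continuous_1, rule integrable_continuous_real)

lemma integral_upper_limit_has_real_derivative:
  assumes "continuous_on {0..1} (c::real \<Rightarrow> real)" "t \<in> {0<..<1}"
  shows "((\<lambda>s. integral {0..s} c) has_real_derivative c t) (at t)"
proof -
  have "((\<lambda>s. integral {0..s} c) has_real_derivative c t) (at t within {0..1})"
    using assms by (intro integral_has_real_derivative) auto
  moreover have "at t within {0..1} = at t"
    using assms(2) by (intro at_within_interior) simp
  ultimately show ?thesis by simp
qed

lemma integral_pos_continuous: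
  fixes q :: "real \<Rightarrow> real"
  assumes "a < b" "continuous_on {a..b} q" "\<And>t. t \<in> {a..b} \<Longrightarrow> q t > 0"
  shows "integral {a..b} q > 0"
proof -
  obtain x where x: "x \<in> {a..b}" "\<And>y. y \<in> {a..b} \<Longrightarrow> q x \<le> q y"
    using continuous_attains_inf[of "{a..b}" q] assms by auto
  have "(b - a) * q x = integral {a..b} (\<lambda>_. q x)" using assms by simp
  also have "\<dots> \<le> integral {a..b} q"
    using x assms by (intro integral_le integrable_continuous_real) auto
  finally show ?thesis using assms x by (smt (verit) mult_pos_pos)
qed

lemma abs_integral_le_if_open_bound:
  fixes F G :: "real \<Rightarrow> real"
  assumes "F integrable_on {a..b}" "G integrable_on {a..b}" "\<And>t. t \<in> {a<..<b} \<Longrightarrow> \<bar>F t\<bar> \<le> G t"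
  shows "\<bar>integral {a..b} F\<bar> \<le> integral {a..b} G"
proof -
  have "norm (integral {a<..<b} F) \<le> integral {a<..<b} G"
    using assms by (intro integral_norm_bound_integral) (auto simp: integrable_on_open_interval_real)
  then show ?thesis by (simp add: integral_open_interval_real[symmetric])
qed

lemma weighted_integral_near_const:
  fixes q w :: "real \<Rightarrow> real"
  assumes q: "q integrable_on {a..b}" and qw: "(\<lambda>t. q t * w t) integrable_on {a..b}"
    and near: "\<And>t. t \<in> {a<..<b} \<Longrightarrow> q t \<ge> 0 \<and> \<bar>w t - c\<bar> \<le> e"
  shows "\<bar>integral {a..b} (\<lambda>t. q t * w t) - c * integral {a..b} q\<bar> \<le> e * integral {a..b} q"
proof -
  have "\<bar>integral {a..b} (\<lambda>t. q t * w t - c * q t)\<bar> \<le> integral {a..b} (\<lambda>t. e * q t)"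
  proof (rule abs_integral_le_if_open_bound)
    show "(\<lambda>t. q t * w t - c * q t) integrable_on {a..b}" "(\<lambda>t. e * q t) integrable_on {a..b}"
      using q qw by (auto intro: integrable_diff integrable_on_mult_right)
    fix t assume "t \<in> {a<..<b}"
    then have "q t * \<bar>w t - c\<bar> \<le> q t * e" using near by (intro mult_left_mono) auto
    moreover have "\<bar>q t * w t - c * q t\<bar> = q t * \<bar>w t - c\<bar>"
    proof -
      have "q t * w t - c * q t = q t * (w t - c)" by (simp add: algebra_simps)
      then show ?thesis using near[OF \<open>t \<in> _\<close>] by (simp add: abs_mult)
    qed
    ultimately show "\<bar>q t * w t - c * q t\<bar> \<le> e * q t" by (simp add: mult.commute)
  qed
  then show ?thesis
    using q qw by (simp add: integral_diff integrable_on_mult_right)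
qed

lemma product_ratio_perturbation:
  fixes Q E1 E2 E3 w0 z0 B e :: real
  assumes "Q > 0" "\<bar>E1\<bar> \<le> e*Q" "\<bar>E2\<bar> \<le> e*Q" "\<bar>E3\<bar> \<le> 2*B*e*Q" "\<bar>w0\<bar> \<le> B" "\<bar>z0\<bar> \<le> B" "e \<ge> 0"
  shows "\<bar>(w0*Q + E1)*(z0*Q + E2)/Q - (w0*z0*Q + E3)\<bar> \<le> (4*B + e)*e*Q"
proof -
  have eq: "(w0*Q + E1)*(z0*Q + E2)/Q - (w0*z0*Q + E3) = w0*E2 + z0*E1 + E1*E2/Q - E3"
    using assms(1) by (simp add: field_simps)
  have b1: "\<bar>w0*E2\<bar> \<le> B*(e*Q)" and b2: "\<bar>z0*E1\<bar> \<le> B*(e*Q)"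
    and "\<bar>E1*E2\<bar> \<le> (e*Q)*(e*Q)"
    unfolding abs_mult using assms by (auto intro!: mult_mono)
  then have "\<bar>E1*E2/Q\<bar> \<le> e*e*Q" using assms(1) by (simp add: abs_div field_simps)
  moreover have "\<bar>w0*E2 + z0*E1 + E1*E2/Q - E3\<bar> \<le> \<bar>w0*E2\<bar> + \<bar>z0*E1\<bar> + \<bar>E1*E2/Q\<bar> + \<bar>E3\<bar>"
    by linarith
  ultimately have "\<bar>w0*E2 + z0*E1 + E1*E2/Q - E3\<bar> \<le> (4*B + e)*e*Q"
    using b1 b2 assms(4) by (simp add: algebra_simps)
  then show ?thesis unfolding eq .
qed

lemma integral_ratio_approx:
  fixes q w z :: "real \<Rightarrow> real"
  assumes ab: "a < b" and qc: "continuous_on {a..b} q" and qp: "\<And>t. t \<in> {a..b} \<Longrightarrow> q t > 0"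
    and iw: "(\<lambda>t. q t * w t) integrable_on {a..b}" and iz: "(\<lambda>t. q t * z t) integrable_on {a..b}"
    and iwz: "(\<lambda>t. q t * (w t * z t)) integrable_on {a..b}"
    and osc: "\<And>s t. s \<in> {a<..<b} \<Longrightarrow> t \<in> {a<..<b} \<Longrightarrow> \<bar>w s - w t\<bar> \<le> e \<and> \<bar>z s - z t\<bar> \<le> e"
    and bnd: "\<And>s. s \<in> {a<..<b} \<Longrightarrow> \<bar>w s\<bar> \<le> B \<and> \<bar>z s\<bar> \<le> B"
    and e: "e \<ge> 0"
  shows "\<bar>integral {a..b} (\<lambda>t. q t * w t) * integral {a..b} (\<lambda>t. q t * z t) / integral {a..b} q
      - integral {a..b} (\<lambda>t. q t * (w t * z t))\<bar> \<le> (4*B + e) * e * integral {a..b} q"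
proof -
  define t0 where "t0 = (a + b) / 2"
  have t0: "t0 \<in> {a<..<b}" using ab unfolding t0_def by auto
  define Q where "Q = integral {a..b} q"
  have Q: "Q > 0" unfolding Q_def by (rule integral_pos_continuous[OF ab qc qp])
  have qi: "q integrable_on {a..b}" by (rule integrable_continuous_real[OF qc])
  have q0: "\<And>t. t \<in> {a<..<b} \<Longrightarrow> q t \<ge> 0" using qp less_imp_le by auto
  define E1 where "E1 = integral {a..b} (\<lambda>t. q t * w t) - w t0 * Q"
  define E2 where "E2 = integral {a..b} (\<lambda>t. q t * z t) - z t0 * Q"
  define E3 where "E3 = integral {a..b} (\<lambda>t. q t * (w t * z t)) - (w t0 * z t0) * Q"
  have "\<bar>E1\<bar> \<le> e * Q" unfolding E1_def Q_def
    by (rule weighted_integral_near_const[OF qi iw]) (use q0 osc[OF _ t0] in auto)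
  moreover have "\<bar>E2\<bar> \<le> e * Q" unfolding E2_def Q_def
    by (rule weighted_integral_near_const[OF qi iz]) (use q0 osc[OF _ t0] in auto)
  moreover have "\<bar>E3\<bar> \<le> 2*B*e * Q" unfolding E3_def Q_def
  proof (rule weighted_integral_near_const[OF qi iwz])
    fix t assume t: "t \<in> {a<..<b}"
    have "\<bar>w t * (z t - z t0)\<bar> \<le> B * e" "\<bar>z t0 * (w t - w t0)\<bar> \<le> B * e"
      unfolding abs_mult using osc[OF t t0] bnd[OF t] bnd[OF t0] by (auto intro!: mult_mono)
    moreover have "w t * z t - w t0 * z t0 = w t * (z t - z t0) + z t0 * (w t - w t0)"
      by (simp add: algebra_simps)
    ultimately show "q t \<ge> 0 \<and> \<bar>w t * z t - w t0 * z t0\<bar> \<le> 2*B*e" using q0[OF t] by linarith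
  qed
  ultimately have "\<bar>(w t0 * Q + E1) * (z t0 * Q + E2) / Q - (w t0 * z t0 * Q + E3)\<bar> \<le> (4*B + e) * e * Q"
    using product_ratio_perturbation[OF Q] bnd[OF t0] e by blast
  then show ?thesis unfolding E1_def E2_def E3_def Q_def by simp
qed

lemma finite_family_bounded_on:
  fixes S :: "(real \<Rightarrow> real) set"
  assumes "finite S" "\<And>W. W \<in> S \<Longrightarrow> continuous_on {0..1} W"
  shows "\<exists>B. \<forall>W\<in>S. \<forall>t\<in>{0..1}. \<bar>W t\<bar> \<le> B"
  using assms
proof (induction S rule: finite_induct)
  case (insert W S)
  obtain B where B: "\<forall>W\<in>S. \<forall>t\<in>{0..1}. \<bar>W t\<bar> \<le> B" using insert by auto
  have "compact (W ` {0..1})"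
    using insert.prems by (intro compact_continuous_image) auto
  then obtain a where "\<forall>x\<in>W ` {0..1}. norm x \<le> a" 
    unfolding bounded_iff by (metis compact_imp_bounded bounded_iff)
  then show ?case using B by (intro exI[of _ "max a B"]) force
qed simp

lemma finite_family_uniformly_continuous_on:
  fixes S :: "(real \<Rightarrow> real) set"
  assumes "finite S" "\<And>W. W \<in> S \<Longrightarrow> continuous_on {0..1} W" "e > 0"
  shows "\<exists>d>0. \<forall>W\<in>S. \<forall>s\<in>{0..1}. \<forall>t\<in>{0..1}. \<bar>s - t\<bar> < d \<longrightarrow> \<bar>W s - W t\<bar> < e"
  using assms
proof (induction S rule: finite_induct)
  case (insert W S)
  obtain d where d: "d > 0" "\<forall>W\<in>S. \<forall>s\<in>{0..1}. \<forall>t\<in>{0..1}. \<bar>s - t\<bar> < d \<longrightarrow> \<bar>W s - W t\<bar> < e"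
    using insert by auto
  have "uniformly_continuous_on {0..1} W"
    using insert.prems by (intro compact_uniformly_continuous) auto
  then obtain d' where d': "d' > 0" "\<forall>x\<in>{0..1}. \<forall>x'\<in>{0..1}. dist x' x < d' \<longrightarrow> dist (W x') (W x) < e"
    unfolding uniformly_continuous_on_def using insert.prems by blast
  show ?case
    using d d' by (intro exI[of _ "min d d'"]) (auto simp: dist_real_def)
qed (auto intro: exI[of _ 1])

section \<open>Exhausting the index set by levels\<close>

definition idx_upto :: "nat \<Rightarrow> (nat \<times> nat) set" where
  "idx_upto N = {(0,0)} \<union> Sigma {1..N} (\<lambda>n. {..<2^(n-1)})"

lemma finite_idx_upto: "finite (idx_upto N)"
  unfolding idx_upto_def by auto

lemma idx_upto_Suc: "idx_upto (Suc N) = idx_upto N \<union> (\<lambda>k. (Suc N, k)) ` {..<2^N}"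
  unfolding idx_upto_def by (auto simp: image_iff le_Suc_eq)

lemma idx_upto_disjoint_level: "idx_upto N \<inter> (\<lambda>k. (Suc N, k)) ` {..<2^N} = {}"
  unfolding idx_upto_def by auto

lemma idx_upto_subset_idx: "idx_upto N \<subseteq> idx"
  unfolding idx_upto_def idx_def by auto

lemma idx_upto_mono: "N \<le> M \<Longrightarrow> idx_upto N \<subseteq> idx_upto M"
  unfolding idx_upto_def by auto

lemma finite_subset_idx_upto:
  assumes "finite X" "X \<subseteq> idx"
  shows "\<exists>N. X \<subseteq> idx_upto N"
proof -
  have "X \<subseteq> idx_upto (Max (insert 0 (fst ` X)))"
  proof
    fix ij assume ij: "ij \<in> X"
    then have "fst ij \<le> Max (insert 0 (fst ` X))" using assms by (intro Max_ge) auto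
    then show "ij \<in> idx_upto (Max (insert 0 (fst ` X)))"
      using assms ij unfolding idx_upto_def idx_def by (cases ij) auto
  qed
  then show ?thesis by blast
qed

lemma idx_upto_tendsto_finite_subsets: "filterlim idx_upto (finite_subsets_at_top idx) sequentially"
  unfolding filterlim_finite_subsets_at_top eventually_sequentially
  using finite_subset_idx_upto idx_upto_mono finite_idx_upto idx_upto_subset_idx by (meson order_trans)

lemma summable_on_idx_if_partial_sums_bounded:
  fixes c :: "nat \<times> nat \<Rightarrow> real"
  assumes "\<And>ij. ij \<in> idx \<Longrightarrow> c ij \<ge> 0" and "Bseq (\<lambda>N. \<Sum>ij\<in>idx_upto N. c ij)"
  shows "c summable_on idx"
proof (rule nonneg_bdd_above_summable_on)
  obtain K where K: "\<And>N. norm (\<Sum>ij\<in>idx_upto N. c ij) \<le> K"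
    using assms(2) unfolding Bseq_def by blast
  show "bdd_above (sum c ` {F. F \<subseteq> idx \<and> finite F})"
  proof (rule bdd_aboveI)
    fix x assume "x \<in> sum c ` {F. F \<subseteq> idx \<and> finite F}"
    then obtain F where F: "F \<subseteq> idx" "finite F" "x = sum c F" by blast
    obtain N where N: "F \<subseteq> idx_upto N" using finite_subset_idx_upto[OF F(2,1)] by blast
    have "x \<le> (\<Sum>ij\<in>idx_upto N. c ij)"
      unfolding F(3) using assms(1) idx_upto_subset_idx by (intro sum_mono2[OF finite_idx_upto N]) blast+
    also have "\<dots> \<le> K" using K[of N] by simp
    finally show "x \<le> K" .
  qed
qed (use assms in auto)

text \<open>Squares are summable by boundedness of their partial sums, products then by
  \<open>\<bar>a b\<bar> \<le> (a\<^sup>2 + b\<^sup>2)/2\<close>; the sum is the limit along the exhausting sets \<open>idx_upto N\<close>.\<close>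

lemma has_sum_idx_from_partial_sums:
  fixes a b :: "nat \<times> nat \<Rightarrow> real"
  assumes "(\<lambda>N. \<Sum>ij\<in>idx_upto N. a ij * a ij) \<longlonglongrightarrow> Ta"
    and "(\<lambda>N. \<Sum>ij\<in>idx_upto N. b ij * b ij) \<longlonglongrightarrow> Tb"
    and lim: "(\<lambda>N. \<Sum>ij\<in>idx_upto N. a ij * b ij) \<longlonglongrightarrow> T"
  shows "((\<lambda>ij. a ij * b ij) has_sum T) idx"
proof -
  have "(\<lambda>ij. a ij * a ij) summable_on idx" "(\<lambda>ij. b ij * b ij) summable_on idx"
    using assms(1,2) by (auto intro!: summable_on_idx_if_partial_sums_bounded convergent_imp_Bseq convergentI)
  then have g: "(\<lambda>ij. (a ij * a ij + b ij * b ij) * (1/2)) summable_on idx"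
    by (intro summable_on_cmult_left summable_on_add)
  have "(\<lambda>ij. a ij * b ij) summable_on idx"
  proof (rule abs_summable_summable, rule Infinite_Sum.abs_summable_on_comparison_test'[OF g])
    fix ij
    have "0 \<le> (\<bar>a ij\<bar> - \<bar>b ij\<bar>)^2" by simp
    then show "norm (a ij * b ij) \<le> (a ij * a ij + b ij * b ij) * (1/2)"
      by (simp add: power2_eq_square abs_mult algebra_simps)
  qed
  then obtain s where s: "((\<lambda>ij. a ij * b ij) has_sum s) idx" unfolding summable_on_def by blast
  have "(\<lambda>N. \<Sum>ij\<in>idx_upto N. a ij * b ij) \<longlonglongrightarrow> s"
    using filterlim_compose[OF s[unfolded has_sum_def] idx_upto_tendsto_finite_subsets] .
  then have "s = T" using lim by (rule LIMSEQ_unique)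
  with s show ?thesis by simp
qed

section \<open>Nested partitions\<close>

text \<open>Level \<open>N\<close> of the partition consists of the \<open>2^N\<close> tiles \<open>[l (N+1) k, r (N+1) k]\<close>.\<close>

locale partition_tree =
  fixes \<rho> :: real and l m r :: "nat \<Rightarrow> nat \<Rightarrow> real"
  assumes partition: "nested_partition \<rho> l m r"
begin

lemma rho_bounds: "0 < \<rho>" "\<rho> < 1"
  using partition unfolding nested_partition_def by auto

lemma root_tile: "l (Suc 0) 0 = 0" "r (Suc 0) 0 = 1"
  using partition unfolding nested_partition_def by auto

lemma tile_split:
  assumes "k < 2^N"
  shows "l (Suc N) k < m (Suc N) k" "m (Suc N) k < r (Suc N) k"
    "max (r (Suc N) k - m (Suc N) k) (m (Suc N) k - l (Suc N) k) < \<rho> * (r (Suc N) k - l (Suc N) k)"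
    "l (Suc (Suc N)) (2*k) = l (Suc N) k" "r (Suc (Suc N)) (2*k) = m (Suc N) k"
    "l (Suc (Suc N)) (2*k+1) = m (Suc N) k" "r (Suc (Suc N)) (2*k+1) = r (Suc N) k"
  using partition assms unfolding nested_partition_def
  by (auto dest!: spec[of _ "Suc N"] simp del: max_less_iff_conj)

lemma tile_induct[consumes 1, case_names root children]:
  assumes "(k::nat) < 2^N" and root: "P 0 0"
    and children: "\<And>N j. j < (2::nat)^N \<Longrightarrow> P N j \<Longrightarrow> P (Suc N) (2*j) \<and> P (Suc N) (2*j+1)"
  shows "P N k"
  using assms(1)
proof (induction N arbitrary: k)
  case (Suc N)
  have "k div 2 < 2^N" using Suc.prems by auto
  then have "P (Suc N) (2*(k div 2)) \<and> P (Suc N) (2*(k div 2)+1)" using Suc.IH children by blast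
  then show ?case by (metis add.right_neutral div_mult_mod_eq mod2_eq_if mult.commute)
qed (use root in simp)

lemma tile_bounds: "k < 2^N \<Longrightarrow> 0 \<le> l (Suc N) k \<and> l (Suc N) k < r (Suc N) k \<and> r (Suc N) k \<le> 1"
proof (induction N k rule: tile_induct)
  case root then show ?case using root_tile by simp
next
  case (children N j) then show ?case using tile_split[OF children(1)] by auto
qed

lemma tile_midpoint_bounds:
  "k < 2^N \<Longrightarrow> 0 \<le> l (Suc N) k \<and> l (Suc N) k < m (Suc N) k \<and> m (Suc N) k < r (Suc N) k \<and> r (Suc N) k \<le> 1"
  using tile_bounds tile_split by fastforce

lemma tile_width: "k < 2^N \<Longrightarrow> r (Suc N) k - l (Suc N) k \<le> \<rho>^N"
proof (induction N k rule: tile_induct)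
  case root then show ?case using root_tile by simp
next
  case (children N j)
  have "\<rho> * (r (Suc N) j - l (Suc N) j) \<le> \<rho> * \<rho>^N" using children rho_bounds by simp
  then show ?case using tile_split[OF children(1)] by (auto simp del: max_less_iff_conj)
qed

lemma tiles_adjacent: "k + 1 < 2^N \<Longrightarrow> r (Suc N) k = l (Suc N) (k+1)"
proof (induction N arbitrary: k)
  case (Suc N)
  have kd: "k div 2 < 2^N" using Suc.prems by auto
  show ?case
  proof (cases "even k")
    case True
    then have "k = 2*(k div 2)" by simp
    then show ?thesis using tile_split[OF kd] by (metis Suc_eq_plus1 add_Suc_right)
  next
    case False
    then have k: "k = 2*(k div 2) + 1" and k1: "k+1 = 2*(k div 2 + 1)" by presburger+
    then have kd1: "k div 2 + 1 < 2^N" using Suc.prems by simp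
    then show ?thesis using Suc.IH tile_split[OF kd] tile_split[OF kd1] k k1 by (metis Suc_eq_plus1)
  qed
qed simp

lemma tiles_ordered: "j < k \<Longrightarrow> k < 2^N \<Longrightarrow> r (Suc N) j \<le> l (Suc N) k"
proof (induction k)
  case (Suc k)
  show ?case
  proof (cases "j = k")
    case True then show ?thesis using tiles_adjacent[of k N] Suc.prems by simp
  next
    case False
    then have "r (Suc N) j \<le> l (Suc N) k" using Suc by simp
    also have "\<dots> \<le> r (Suc N) k" using tile_bounds[of k N] Suc.prems by simp
    also have "\<dots> = l (Suc N) (Suc k)" using tiles_adjacent[of k N] Suc.prems by simp
    finally show ?thesis .
  qed
qed simp

lemma tile_endpoint_not_in_tile:
  assumes "j < 2^N" "k < 2^N"
  shows "l (Suc N) j \<notin> {l (Suc N) k<..<r (Suc N) k} \<and> r (Suc N) j \<notin> {l (Suc N) k<..<r (Suc N) k}"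
proof -
  consider "j = k" | "j < k" | "k < j" by linarith
  then show ?thesis
    using tiles_ordered[of j k N] tiles_ordered[of k j N] tile_bounds[of j N] assms by cases auto
qed

lemma child_tile_subset:
  assumes "k < 2^(Suc N)"
  shows "{l (Suc (Suc N)) k<..<r (Suc (Suc N)) k} \<subseteq> {l (Suc N) (k div 2)<..<r (Suc N) (k div 2)}"
proof -
  have kd: "k div 2 < 2^N" using assms by auto
  have "k = 2*(k div 2) \<or> k = 2*(k div 2) + 1" by presburger
  then show ?thesis using tile_split[OF kd] by (auto simp del: max_less_iff_conj)
qed

lemma coarser_endpoint_not_in_tile:
  assumes "M \<le> N" "j < 2^M" "k < 2^N"
  shows "l (Suc M) j \<notin> {l (Suc N) k<..<r (Suc N) k} \<and> r (Suc M) j \<notin> {l (Suc N) k<..<r (Suc N) k}"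
  using assms
proof (induction N arbitrary: k)
  case 0 then show ?case using tile_endpoint_not_in_tile by simp
next
  case (Suc N)
  show ?case
  proof (cases "M = Suc N")
    case True then show ?thesis using tile_endpoint_not_in_tile Suc.prems by simp
  next
    case False
    then have "M \<le> N" "k div 2 < 2^N" using Suc.prems by auto
    then show ?thesis using Suc.IH Suc.prems child_tile_subset[OF Suc.prems(3)] by blast
  qed
qed

lemma sum_tiles_additive:
  fixes \<Phi> :: "real \<Rightarrow> real \<Rightarrow> 'a::comm_monoid_add"
  assumes additive: "\<And>N k. k < 2^N \<Longrightarrow>
      \<Phi> (l (Suc N) k) (r (Suc N) k) = \<Phi> (l (Suc N) k) (m (Suc N) k) + \<Phi> (m (Suc N) k) (r (Suc N) k)"
  shows "(\<Sum>k<2^N. \<Phi> (l (Suc N) k) (r (Suc N) k)) = \<Phi> 0 1"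
proof (induction N)
  case 0 then show ?case using root_tile by simp
next
  case (Suc N)
  have "(\<Sum>k<2^Suc N. \<Phi> (l (Suc (Suc N)) k) (r (Suc (Suc N)) k))
      = (\<Sum>j<2^N. \<Phi> (l (Suc (Suc N)) (2*j)) (r (Suc (Suc N)) (2*j))
                  + \<Phi> (l (Suc (Suc N)) (2*j+1)) (r (Suc (Suc N)) (2*j+1)))"
    using sum_lessThan_double[of "\<lambda>k. \<Phi> (l (Suc (Suc N)) k) (r (Suc (Suc N)) k)" "2^N"] by simp
  also have "\<dots> = (\<Sum>j<2^N. \<Phi> (l (Suc N) j) (r (Suc N) j))"
  proof (rule sum.cong[OF refl])
    fix j assume "j \<in> {..<(2::nat)^N}"
    then have j: "j < 2^N" by simp
    show "\<Phi> (l (Suc (Suc N)) (2*j)) (r (Suc (Suc N)) (2*j))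
        + \<Phi> (l (Suc (Suc N)) (2*j+1)) (r (Suc (Suc N)) (2*j+1)) = \<Phi> (l (Suc N) j) (r (Suc N) j)"
      unfolding tile_split[OF j] additive[OF j] ..
  qed
  finally show ?case using Suc.IH by simp
qed

lemma unit_interval_from_tiles:
  assumes combine: "\<And>N k. k < 2^N \<Longrightarrow> P (l (Suc N) k) (m (Suc N) k) \<Longrightarrow>
      P (m (Suc N) k) (r (Suc N) k) \<Longrightarrow> P (l (Suc N) k) (r (Suc N) k)"
    and tiles: "\<And>k. k < 2^N \<Longrightarrow> P (l (Suc N) k) (r (Suc N) k)"
  shows "P 0 1"
  using tiles
proof (induction N)
  case 0 then show ?case using root_tile by force
next
  case (Suc N)
  show ?case
  proof (rule Suc.IH)
    fix k assume k: "k < (2::nat)^N"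
    then have "2*k < 2^Suc N" "2*k+1 < 2^Suc N" by auto
    then show "P (l (Suc N) k) (r (Suc N) k)"
      using Suc.prems combine[OF k] tile_split[OF k] by metis
  qed
qed

lemma sum_tile_integrals:
  fixes F :: "real \<Rightarrow> real"
  assumes "F integrable_on {0..1}"
  shows "(\<Sum>k<2^N. integral {l (Suc N) k..r (Suc N) k} F) = integral {0..1} F"
proof (rule sum_tiles_additive)
  fix N k assume k: "k < (2::nat)^N"
  have "F integrable_on {l (Suc N) k..r (Suc N) k}"
    using tile_bounds[OF k] by (intro integrable_subinterval_real[OF assms]) auto
  then show "integral {l (Suc N) k..r (Suc N) k} F
      = integral {l (Suc N) k..m (Suc N) k} F + integral {m (Suc N) k..r (Suc N) k} F"
    using tile_midpoint_bounds[OF k] by (intro Henstock_Kurzweil_Integration.integral_combine[symmetric]) auto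
qed

lemma integrable_on_unit_if_tilewise_continuous:
  fixes F :: "real \<Rightarrow> real"
  assumes "\<And>k. k < 2^N \<Longrightarrow> \<exists>G. continuous_on {l (Suc N) k..r (Suc N) k} G
      \<and> (\<forall>s\<in>{l (Suc N) k<..<r (Suc N) k}. F s = G s)"
  shows "F integrable_on {0..1}"
proof (rule unit_interval_from_tiles[where P = "\<lambda>a b. F integrable_on {a..b}"])
  fix N k assume "k < (2::nat)^N" "F integrable_on {l (Suc N) k..m (Suc N) k}"
    "F integrable_on {m (Suc N) k..r (Suc N) k}"
  then show "F integrable_on {l (Suc N) k..r (Suc N) k}"
    using tile_midpoint_bounds by (meson Henstock_Kurzweil_Integration.integrable_combine less_imp_le)
next
  fix k assume "k < (2::nat)^N"
  then obtain G where G: "continuous_on {l (Suc N) k..r (Suc N) k} G"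
    "\<forall>s\<in>{l (Suc N) k<..<r (Suc N) k}. F s = G s"
    using assms by blast
  show "F integrable_on {l (Suc N) k..r (Suc N) k}"
  proof (rule integrable_spike_finite[of "{l (Suc N) k, r (Suc N) k}"])
    show "G integrable_on {l (Suc N) k..r (Suc N) k}" by (rule integrable_continuous_real[OF G(1)])
  qed (use G(2) in auto)
qed

lemma rho_power_eventually_less:
  assumes "d > 0"
  shows "\<forall>\<^sub>F N in sequentially. \<rho>^N < d"
proof -
  have "(\<lambda>N. \<rho>^N) \<longlonglongrightarrow> 0" using rho_bounds by (intro LIMSEQ_realpow_zero) auto
  then show ?thesis using assms by (rule order_tendstoD(2))
qed

definition level_controlled :: "nat \<Rightarrow> real \<Rightarrow> real \<Rightarrow> (real \<Rightarrow> real) \<Rightarrow> bool" where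
  "level_controlled N e B w \<longleftrightarrow> (\<forall>k<2^N. \<forall>s\<in>{l (Suc N) k<..<r (Suc N) k}. \<forall>t\<in>{l (Suc N) k<..<r (Suc N) k}.
      \<bar>w s - w t\<bar> \<le> e \<and> \<bar>w s\<bar> \<le> B)"

definition tile_regular :: "(real \<Rightarrow> real) \<Rightarrow> bool" where
  "tile_regular w \<longleftrightarrow> (\<exists>B. \<forall>e>0. \<forall>\<^sub>F N in sequentially. level_controlled N e B w)"

lemma level_controlled_mono:
  "level_controlled N e B w \<Longrightarrow> B \<le> B' \<Longrightarrow> level_controlled N e B' w"
  unfolding level_controlled_def by force

lemma tile_ratio_sum_error:
  fixes q w z :: "real \<Rightarrow> real"
  assumes qc: "continuous_on {0..1} q" and qp: "\<And>t. t \<in> {0..1} \<Longrightarrow> q t > 0"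
    and iw: "(\<lambda>t. q t * w t) integrable_on {0..1}" and iz: "(\<lambda>t. q t * z t) integrable_on {0..1}"
    and iwz: "(\<lambda>t. q t * (w t * z t)) integrable_on {0..1}"
    and w: "level_controlled N e B w" and z: "level_controlled N e B z" and e: "0 \<le> e" "e \<le> 1"
  shows "\<bar>(\<Sum>k<2^N. integral {l (Suc N) k..r (Suc N) k} (\<lambda>t. q t * w t)
              * integral {l (Suc N) k..r (Suc N) k} (\<lambda>t. q t * z t) / integral {l (Suc N) k..r (Suc N) k} q)
         - integral {0..1} (\<lambda>t. q t * (w t * z t))\<bar> \<le> (4*B + 1) * e * integral {0..1} q"
proof -
  let ?I = "\<lambda>k F. integral {l (Suc N) k..r (Suc N) k} F"
  let ?T = "\<lambda>k. ?I k (\<lambda>t. q t * w t) * ?I k (\<lambda>t. q t * z t) / ?I k q"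
  have tile_error: "\<bar>?T k - ?I k (\<lambda>t. q t * (w t * z t))\<bar> \<le> (4*B + 1) * e * ?I k q" if k: "k < 2^N" for k
  proof -
    have ab: "l (Suc N) k < r (Suc N) k" and sub: "{l (Suc N) k..r (Suc N) k} \<subseteq> {0..1}"
      using tile_bounds[OF k] by auto
    have qc': "continuous_on {l (Suc N) k..r (Suc N) k} q" by (rule continuous_on_subset[OF qc sub])
    have "\<bar>?T k - ?I k (\<lambda>t. q t * (w t * z t))\<bar> \<le> (4*B + e) * e * ?I k q"
    proof (rule integral_ratio_approx[OF ab qc'])
      show "(\<lambda>t. q t * w t) integrable_on {l (Suc N) k..r (Suc N) k}"
        "(\<lambda>t. q t * z t) integrable_on {l (Suc N) k..r (Suc N) k}"
        "(\<lambda>t. q t * (w t * z t)) integrable_on {l (Suc N) k..r (Suc N) k}"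
        using sub by (auto intro: integrable_on_subinterval[OF iw] integrable_on_subinterval[OF iz]
            integrable_on_subinterval[OF iwz])
      show "q t > 0" if "t \<in> {l (Suc N) k..r (Suc N) k}" for t using that sub qp by blast
      show "\<bar>w s - w t\<bar> \<le> e \<and> \<bar>z s - z t\<bar> \<le> e"
        if "s \<in> {l (Suc N) k<..<r (Suc N) k}" "t \<in> {l (Suc N) k<..<r (Suc N) k}" for s t
        using w z k that unfolding level_controlled_def by blast
      show "\<bar>w s\<bar> \<le> B \<and> \<bar>z s\<bar> \<le> B" if "s \<in> {l (Suc N) k<..<r (Suc N) k}" for s
        using w z k that unfolding level_controlled_def by blast
    qed (rule e(1))
    also have "\<dots> \<le> (4*B + 1) * e * ?I k q"
      using integral_pos_continuous[OF ab qc'] qp sub e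
      by (intro mult_right_mono mult_right_mono) auto
    finally show ?thesis .
  qed
  have "\<bar>(\<Sum>k<2^N. ?T k) - (\<Sum>k<2^N. ?I k (\<lambda>t. q t * (w t * z t)))\<bar>
      \<le> (\<Sum>k<2^N. \<bar>?T k - ?I k (\<lambda>t. q t * (w t * z t))\<bar>)"
    by (metis (no_types) sum_abs sum_subtractf)
  also have "\<dots> \<le> (\<Sum>k<2^N. (4*B + 1) * e * ?I k q)"
    by (intro sum_mono) (use tile_error in auto)
  also have "\<dots> = (4*B + 1) * e * integral {0..1} q"
    by (simp add: sum_distrib_left[symmetric] sum_tile_integrals integrable_continuous_real[OF qc])
  finally show ?thesis by (simp add: sum_tile_integrals[OF iwz])
qed

text \<open>A Riemann-sum type limit: the tiles shrink, and regular functions become almost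
  constant on each of them.\<close>

lemma tile_ratio_sums_tendsto:
  fixes q w z :: "real \<Rightarrow> real"
  assumes qc: "continuous_on {0..1} q" and qp: "\<And>t. t \<in> {0..1} \<Longrightarrow> q t > 0"
    and iw: "(\<lambda>t. q t * w t) integrable_on {0..1}" and iz: "(\<lambda>t. q t * z t) integrable_on {0..1}"
    and iwz: "(\<lambda>t. q t * (w t * z t)) integrable_on {0..1}"
    and "tile_regular w" "tile_regular z"
  shows "(\<lambda>N. \<Sum>k<2^N. integral {l (Suc N) k..r (Suc N) k} (\<lambda>t. q t * w t)
              * integral {l (Suc N) k..r (Suc N) k} (\<lambda>t. q t * z t) / integral {l (Suc N) k..r (Suc N) k} q)
         \<longlonglongrightarrow> integral {0..1} (\<lambda>t. q t * (w t * z t))"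
proof -
  obtain Bw Bz where
    Bw: "\<And>e. e > 0 \<Longrightarrow> \<forall>\<^sub>F N in sequentially. level_controlled N e Bw w" and
    Bz: "\<And>e. e > 0 \<Longrightarrow> \<forall>\<^sub>F N in sequentially. level_controlled N e Bz z"
    using assms(6,7) unfolding tile_regular_def by blast
  define B where "B = max 0 (max Bw Bz)"
  define C where "C = (4*B + 1) * integral {0..1} q"
  have C: "C > 0" unfolding C_def B_def using integral_pos_continuous[OF _ qc qp] by auto
  show ?thesis unfolding tendsto_iff dist_real_def
  proof (intro allI impI)
    fix e :: real assume e: "e > 0"
    define \<epsilon> where "\<epsilon> = min 1 (e / (2*C))"
    have \<epsilon>: "0 < \<epsilon>" "\<epsilon> \<le> 1" "C * \<epsilon> < e" unfolding \<epsilon>_def using e C by (auto simp: min_mult_distrib_left)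
    have "\<forall>\<^sub>F N in sequentially. level_controlled N \<epsilon> B w \<and> level_controlled N \<epsilon> B z"
      using eventually_conj[OF Bw[OF \<epsilon>(1)] Bz[OF \<epsilon>(1)]]
      by eventually_elim (auto simp: B_def intro: level_controlled_mono)
    then show "\<forall>\<^sub>F N in sequentially. \<bar>(\<Sum>k<2^N. integral {l (Suc N) k..r (Suc N) k} (\<lambda>t. q t * w t)
              * integral {l (Suc N) k..r (Suc N) k} (\<lambda>t. q t * z t) / integral {l (Suc N) k..r (Suc N) k} q)
         - integral {0..1} (\<lambda>t. q t * (w t * z t))\<bar> < e"
    proof eventually_elim
      case (elim N)
      have "(4*B + 1) * \<epsilon> * integral {0..1} q = C * \<epsilon>" unfolding C_def by simp
      then show ?case
        using tile_ratio_sum_error[OF qc qp iw iz iwz elim[THEN conjunct1] elim[THEN conjunct2]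
            less_imp_le[OF \<epsilon>(1)] \<epsilon>(2)] \<epsilon>(3)
        by linarith
    qed
  qed
qed

end

section \<open>Schauder coefficients\<close>

lemma gf_pos: "gf c t > 0"
  unfolding gf_def by simp

lemma gf_0: "gf c 0 = 1"
  unfolding gf_def by simp

lemma continuous_on_gf: "continuous_on {0..1} c \<Longrightarrow> continuous_on {0..1} (gf c)"
  unfolding gf_def by (intro continuous_intros continuous_on_integral_upper_limit)

lemma gf_has_real_derivative:
  "continuous_on {0..1} c \<Longrightarrow> t \<in> {0<..<1} \<Longrightarrow> (gf c has_real_derivative c t * gf c t) (at t)"
  unfolding gf_def[abs_def]
  by (rule derivative_eq_intros integral_upper_limit_has_real_derivative | assumption | simp)+

lemma ff_eq_divide_gf: "ff sG c t = sG t / gf c t"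
  unfolding ff_def gf_def by (simp add: exp_minus field_simps)

lemma hh_add: "hh sG c a b + hh sG c b d = hh sG c a d"
  unfolding hh_def by simp

lemma hh_same: "hh sG c a a = 0"
  unfolding hh_def by simp

definition increment :: "(real \<Rightarrow> real) \<Rightarrow> (real \<Rightarrow> real) \<Rightarrow> real \<Rightarrow> real \<Rightarrow> real" where
  "increment c x a b = x b / gf c b - x a / gf c a"

locale diffusion_coeff =
  fixes sG :: "real \<Rightarrow> real"
  assumes continuous_sG: "continuous_on {0..1} sG"
    and sG_pos: "\<And>t. t \<in> {0..1} \<Longrightarrow> sG t > 0"
begin

lemma ff_pos: "t \<in> {0..1} \<Longrightarrow> ff sG c t > 0"
  unfolding ff_def using sG_pos by simp

lemma continuous_on_ff_sq: "continuous_on {0..1} c \<Longrightarrow> continuous_on {0..1} (\<lambda>t. (ff sG c t)^2)"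
  unfolding ff_def by (intro continuous_intros continuous_on_integral_upper_limit continuous_sG)

lemma hf_has_real_derivative:
  "continuous_on {0..1} c \<Longrightarrow> t \<in> {0<..<1} \<Longrightarrow> (hf sG c has_real_derivative (ff sG c t)^2) (at t)"
  unfolding hf_def[abs_def] by (intro integral_upper_limit_has_real_derivative continuous_on_ff_sq)

lemma continuous_on_hf: "continuous_on {0..1} c \<Longrightarrow> continuous_on {0..1} (hf sG c)"
  unfolding hf_def[abs_def] by (intro continuous_on_integral_upper_limit continuous_on_ff_sq)

lemma hh_eq_integral:
  assumes "continuous_on {0..1} c" "0 \<le> a" "a \<le> b" "b \<le> 1"
  shows "hh sG c a b = integral {a..b} (\<lambda>t. (ff sG c t)^2)"
proof -
  have "(\<lambda>t. (ff sG c t)^2) integrable_on {0..b}"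
    using assms by (intro integrable_continuous_real continuous_on_subset[OF continuous_on_ff_sq]) auto
  then have "integral {0..a} (\<lambda>t. (ff sG c t)^2) + integral {a..b} (\<lambda>t. (ff sG c t)^2)
      = integral {0..b} (\<lambda>t. (ff sG c t)^2)"
    using assms by (intro Henstock_Kurzweil_Integration.integral_combine) auto
  then show ?thesis unfolding hh_def hf_def by linarith
qed

lemma hh_pos:
  assumes "continuous_on {0..1} c" "0 \<le> a" "a < b" "b \<le> 1"
  shows "hh sG c a b > 0"
proof -
  have "(ff sG c t)^2 > 0" if "t \<in> {a..b}" for t
    using that assms ff_pos[of t c] by simp
  then show ?thesis
    unfolding hh_eq_integral[OF assms(1,2) less_imp_le[OF assms(3)] assms(4)]
    using assms by (intro integral_pos_continuous continuous_on_subset[OF continuous_on_ff_sq]) auto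
qed

lemma continuous_on_hh:
  assumes "continuous_on {0..1} c"
  shows "continuous_on {0..1} (\<lambda>t. hh sG c a t)" "continuous_on {0..1} (\<lambda>t. hh sG c t a)"
  unfolding hh_def by (intro continuous_intros continuous_on_hf[OF assms])+

lemma hh_has_real_derivative:
  assumes "continuous_on {0..1} c" "t \<in> {0<..<1}"
  shows "((\<lambda>t. hh sG c a t * L) has_real_derivative (ff sG c t)^2 * L) (at t)"
    and "((\<lambda>t. hh sG c t a * L) has_real_derivative - ((ff sG c t)^2) * L) (at t)"
  unfolding hh_def using hf_has_real_derivative[OF assms] by (auto intro!: derivative_eq_intros)

end

locale schauder_setting = partition_tree + diffusion_coeff
begin

lemma Delta_node:
  assumes c: "continuous_on {0..1} c" and k: "k < 2^N"
  defines "a \<equiv> l (Suc N) k" and "b \<equiv> m (Suc N) k" and "d \<equiv> r (Suc N) k"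
  defines "h1 \<equiv> hh sG c a b" and "h2 \<equiv> hh sG c b d"
  defines "w \<equiv> sqrt (h1 * h2 / (h1 + h2))"
  shows "Delta sG c l m r (Suc N, k) x = (x b / gf c b) / w - w * (x a / gf c a) / h1 - w * (x d / gf c d) / h2"
proof -
  have "hh sG c (l (Suc N) k) (m (Suc N) k) > 0" "hh sG c (m (Suc N) k) (r (Suc N) k) > 0"
    using tile_midpoint_bounds[OF k] by (auto intro!: hh_pos[OF c])
  moreover have "hh sG c (l (Suc N) k) (r (Suc N) k)
      = hh sG c (l (Suc N) k) (m (Suc N) k) + hh sG c (m (Suc N) k) (r (Suc N) k)"
    by (simp add: hh_add)
  ultimately show ?thesis
    unfolding Delta_def Mc_def Lc_def Rc_def sig_def a_def b_def d_def h1_def h2_def w_def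
    using gf_pos[of c "m (Suc N) k"] by (simp add: ac_simps)
qed

lemma Delta_node_product:
  assumes c: "continuous_on {0..1} c" and k: "k < 2^N"
  defines "a \<equiv> l (Suc N) k" and "b \<equiv> m (Suc N) k" and "d \<equiv> r (Suc N) k"
  shows "Delta sG c l m r (Suc N, k) x * Delta sG c l m r (Suc N, k) y =
     increment c x a b * increment c y a b / hh sG c a b + increment c x b d * increment c y b d / hh sG c b d
     - increment c x a d * increment c y a d / hh sG c a d"
proof -
  define h1 h2 where "h1 = hh sG c a b" and "h2 = hh sG c b d"
  have pos: "h1 > 0" "h2 > 0" unfolding h1_def h2_def a_def b_def d_def
    using tile_midpoint_bounds[OF k] by (auto intro!: hh_pos[OF c])
  have "hh sG c a d = h1 + h2" unfolding h1_def h2_def by (simp add: hh_add)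
  moreover have "sqrt (h1*h2/(h1+h2)) > 0" "(sqrt (h1*h2/(h1+h2)))^2 = h1*h2/(h1+h2)" using pos by simp_all
  ultimately show ?thesis
    unfolding Delta_node[OF c k] a_def[symmetric] b_def[symmetric] d_def[symmetric]
      h1_def[symmetric] h2_def[symmetric] increment_def
    using three_point_product_identity[OF pos, where w = "sqrt (h1*h2/(h1+h2))"
        and A = "x a / gf c a" and B = "x b / gf c b" and C = "x d / gf c d"
        and A' = "y a / gf c a" and B' = "y b / gf c b" and C' = "y d / gf c d"] by simp
qed

lemma Delta_root_product:
  assumes "continuous_on {0..1} c" "x 0 = 0" "y 0 = 0"
  shows "Delta sG c l m r (0,0) x * Delta sG c l m r (0,0) y = increment c x 0 1 * increment c y 0 1 / hh sG c 0 1"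
proof -
  have h: "hh sG c 0 1 > 0" by (rule hh_pos[OF assms(1)]) auto
  then have "sqrt (hh sG c 0 1) * sqrt (hh sG c 0 1) = hh sG c 0 1" by simp
  with h show ?thesis
    unfolding Delta_def Lc_def sig_def increment_def using assms gf_pos[of c 1] gf_0
    by (simp add: field_simps)
qed

text \<open>Telescoping over the levels: the node identities of level \<open>N+1\<close> replace each
  level-\<open>N\<close> tile term by the terms of its two children.\<close>

lemma sum_Delta_products_idx_upto:
  assumes c: "continuous_on {0..1} c" and "x 0 = 0" "y 0 = 0"
  shows "(\<Sum>ij\<in>idx_upto N. Delta sG c l m r ij x * Delta sG c l m r ij y) =
     (\<Sum>k<2^N. increment c x (l (Suc N) k) (r (Suc N) k) * increment c y (l (Suc N) k) (r (Suc N) k)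
        / hh sG c (l (Suc N) k) (r (Suc N) k))"
proof (induction N)
  case 0
  show ?case using Delta_root_product[of c x y, OF assms] root_tile by (simp add: idx_upto_def)
next
  case (Suc N)
  let ?T = "\<lambda>a b. increment c x a b * increment c y a b / hh sG c a b"
  let ?P = "\<lambda>ij. Delta sG c l m r ij x * Delta sG c l m r ij y"
  have "(\<Sum>ij\<in>idx_upto (Suc N). ?P ij) = (\<Sum>ij\<in>idx_upto N. ?P ij) + (\<Sum>k<2^N. ?P (Suc N, k))"
    unfolding idx_upto_Suc
    by (subst sum.union_disjoint) (auto simp: finite_idx_upto idx_upto_disjoint_level sum.reindex inj_on_def)
  also have "(\<Sum>k<2^N. ?P (Suc N, k)) = (\<Sum>k<2^N.
      ?T (l (Suc N) k) (m (Suc N) k) + ?T (m (Suc N) k) (r (Suc N) k) - ?T (l (Suc N) k) (r (Suc N) k))"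
    by (rule sum.cong) (auto simp: Delta_node_product[OF c])
  finally have "(\<Sum>ij\<in>idx_upto (Suc N). ?P ij)
      = (\<Sum>k<2^N. ?T (l (Suc N) k) (m (Suc N) k) + ?T (m (Suc N) k) (r (Suc N) k))"
    unfolding Suc.IH by (simp add: sum_subtractf)
  also have "\<dots> = (\<Sum>j<2^N. ?T (l (Suc (Suc N)) (2*j)) (r (Suc (Suc N)) (2*j))
      + ?T (l (Suc (Suc N)) (2*j+1)) (r (Suc (Suc N)) (2*j+1)))"
    by (intro sum.cong refl) (simp add: tile_split[simplified])
  also have "\<dots> = (\<Sum>k<2^Suc N. ?T (l (Suc (Suc N)) k) (r (Suc (Suc N)) k))"
    using sum_lessThan_double[of "\<lambda>k. ?T (l (Suc (Suc N)) k) (r (Suc (Suc N)) k)" "2^N"] by simp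
  finally show ?case .
qed

end

section \<open>Lifting the basis of the \<open>\<alpha>\<close>-process\<close>

locale lift_setting = schauder_setting +
  fixes \<alpha> \<beta> :: "real \<Rightarrow> real"
  assumes continuous_\<alpha>: "continuous_on {0..1} \<alpha>" and continuous_\<beta>: "continuous_on {0..1} \<beta>"
begin

definition lifted_phi :: "nat \<times> nat \<Rightarrow> real \<Rightarrow> real" where
  "lifted_phi nk t = phi sG \<alpha> l m r nk t + (\<alpha> t - \<beta> t) / sG t * psi sG \<alpha> l m r nk t"

text \<open>Where \<open>\<psi>\<^sup>\<alpha>\<^sub>n\<^sub>k = g\<^sub>\<alpha> K\<close> with \<open>K\<close> differentiable, \<open>lifted_phi = f\<^sub>\<beta> W\<close> and
  \<open>(\<psi>\<^sup>\<alpha>\<^sub>n\<^sub>k / g\<^sub>\<beta>)' = f\<^sub>\<beta>\<^sup>2 W\<close> for \<open>W = piece_density K K'\<close>.\<close>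

definition piece_density :: "(real \<Rightarrow> real) \<Rightarrow> (real \<Rightarrow> real) \<Rightarrow> real \<Rightarrow> real" where
  "piece_density K K' t = gf \<alpha> t * gf \<beta> t * (K' t + (\<alpha> t - \<beta> t) * K t) / (sG t)^2"

lemma continuous_on_piece_density:
  assumes "continuous_on {0..1} K" "continuous_on {0..1} K'"
  shows "continuous_on {0..1} (piece_density K K')"
proof -
  have "\<And>t. t \<in> {0..1} \<Longrightarrow> (sG t)^2 \<noteq> 0" using sG_pos by force
  then show ?thesis unfolding piece_density_def
    by (intro continuous_intros continuous_on_gf continuous_\<alpha> continuous_\<beta> continuous_sG assms) auto
qed

lemma piece_density_of_smooth_piece:
  assumes ab: "0 \<le> a" "a < b" "b \<le> 1"
    and psi_eq: "\<And>t. t \<in> {a..b} \<Longrightarrow> psi sG \<alpha> l m r nk t = gf \<alpha> t * K t"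
    and K': "\<And>s. s \<in> {a<..<b} \<Longrightarrow> (K has_real_derivative K' s) (at s)"
    and s: "s \<in> {a<..<b}"
  shows "lifted_phi nk s = ff sG \<beta> s * piece_density K K' s"
proof -
  have s01: "s \<in> {0..1}" using s ab by auto
  have "((\<lambda>t. psi sG \<alpha> l m r nk t / gf \<alpha> t) has_real_derivative K' s) (at s)"
  proof (rule has_field_derivative_transform_within_open[OF K'[OF s] open_greaterThanLessThan s])
    fix t assume "t \<in> {a<..<b}"
    then show "K t = psi sG \<alpha> l m r nk t / gf \<alpha> t" using psi_eq[of t] gf_pos[of \<alpha> t] by simp
  qed
  then have "phi sG \<alpha> l m r nk s = K' s / ff sG \<alpha> s"
    unfolding phi_def by (simp add: DERIV_imp_deriv)
  then show ?thesis
    unfolding lifted_phi_def piece_density_def ff_eq_divide_gf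
    using s psi_eq[of s] sG_pos[OF s01] gf_pos[of \<alpha> s] gf_pos[of \<beta> s]
    by (simp add: field_simps power2_eq_square)
qed

lemma increment_has_integral_of_smooth_piece:
  assumes ab: "0 \<le> a" "a < b" "b \<le> 1"
    and psi_eq: "\<And>t. t \<in> {a..b} \<Longrightarrow> psi sG \<alpha> l m r nk t = gf \<alpha> t * K t"
    and K: "continuous_on {0..1} K"
    and K': "\<And>s. s \<in> {a<..<b} \<Longrightarrow> (K has_real_derivative K' s) (at s)"
  shows "((\<lambda>s. (ff sG \<beta> s)^2 * piece_density K K' s) has_integral increment \<beta> (psi sG \<alpha> l m r nk) a b) {a..b}"
  unfolding increment_def
proof (rule fundamental_theorem_of_calculus_interior)
  show "a \<le> b" using ab by simp
  have "continuous_on {a..b} (\<lambda>t. gf \<alpha> t * K t / gf \<beta> t)"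
    using ab gf_pos[of \<beta>]
    by (intro continuous_intros continuous_on_subset[OF continuous_on_gf[OF continuous_\<alpha>]]
        continuous_on_subset[OF continuous_on_gf[OF continuous_\<beta>]] continuous_on_subset[OF K])
      (auto simp: less_imp_neq[symmetric])
  then show "continuous_on {a..b} (\<lambda>t. psi sG \<alpha> l m r nk t / gf \<beta> t)"
    by (rule continuous_on_eq) (simp add: psi_eq)
next
  fix s assume s: "s \<in> {a<..<b}"
  then have s01: "s \<in> {0<..<1}" using ab by auto
  have "((\<lambda>t. gf \<alpha> t * K t) has_real_derivative \<alpha> s * gf \<alpha> s * K s + K' s * gf \<alpha> s) (at s)"
    using DERIV_mult[OF gf_has_real_derivative[OF continuous_\<alpha> s01] K'[OF s]] by simp
  from DERIV_divide[OF this gf_has_real_derivative[OF continuous_\<beta> s01]]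
  have "((\<lambda>t. gf \<alpha> t * K t / gf \<beta> t) has_real_derivative
      ((\<alpha> s * gf \<alpha> s * K s + K' s * gf \<alpha> s) * gf \<beta> s - gf \<alpha> s * K s * (\<beta> s * gf \<beta> s))
        / (gf \<beta> s * gf \<beta> s)) (at s)"
    using gf_pos[of \<beta> s] by simp
  moreover have "((\<alpha> s * gf \<alpha> s * K s + K' s * gf \<alpha> s) * gf \<beta> s - gf \<alpha> s * K s * (\<beta> s * gf \<beta> s))
        / (gf \<beta> s * gf \<beta> s) = (ff sG \<beta> s)^2 * piece_density K K' s"
    unfolding piece_density_def ff_eq_divide_gf
    using sG_pos[of s] s01 gf_pos[of \<alpha> s] gf_pos[of \<beta> s] by (simp add: field_simps power2_eq_square)
  ultimately have "((\<lambda>t. gf \<alpha> t * K t / gf \<beta> t) has_real_derivative (ff sG \<beta> s)^2 * piece_density K K' s) (at s)"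
    by simp
  then have "((\<lambda>t. psi sG \<alpha> l m r nk t / gf \<beta> t) has_real_derivative (ff sG \<beta> s)^2 * piece_density K K' s) (at s)"
    by (rule has_field_derivative_transform_within_open[OF _ open_greaterThanLessThan s]) (simp add: psi_eq)
  then show "((\<lambda>t. psi sG \<alpha> l m r nk t / gf \<beta> t) has_vector_derivative (ff sG \<beta> s)^2 * piece_density K K' s) (at s)"
    by (simp add: has_real_derivative_iff_has_vector_derivative)
qed

text \<open>The finitely many densities of \<open>\<psi>\<^sup>\<alpha>\<^sub>n\<^sub>k\<close> on intervals without its breakpoints: the
  rising part, the falling part and zero (root: only the rising part).\<close>

definition density_pieces :: "nat \<times> nat \<Rightarrow> (real \<Rightarrow> real) set" where
  "density_pieces nk = (case nk of (n, k) \<Rightarrow>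
     if n = 0 then {piece_density (\<lambda>t. hh sG \<alpha> 0 t * Lc sG \<alpha> l m r nk) (\<lambda>t. (ff sG \<alpha> t)^2 * Lc sG \<alpha> l m r nk)}
     else {piece_density (\<lambda>t. hh sG \<alpha> (l n k) t * Lc sG \<alpha> l m r nk) (\<lambda>t. (ff sG \<alpha> t)^2 * Lc sG \<alpha> l m r nk),
           piece_density (\<lambda>t. hh sG \<alpha> t (r n k) * Rc sG \<alpha> l m r nk) (\<lambda>t. - ((ff sG \<alpha> t)^2) * Rc sG \<alpha> l m r nk),
           piece_density (\<lambda>_. 0) (\<lambda>_. 0)})"

lemma finite_density_pieces: "finite (density_pieces nk)"
  unfolding density_pieces_def by (auto split: prod.splits)

lemma continuous_on_density_pieces: "W \<in> density_pieces nk \<Longrightarrow> continuous_on {0..1} W"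
  unfolding density_pieces_def
  by (auto intro!: continuous_on_piece_density continuous_intros continuous_on_hh continuous_on_ff_sq
      continuous_\<alpha> split: prod.splits if_splits)

definition psi_smooth_on :: "nat \<times> nat \<Rightarrow> real \<Rightarrow> real \<Rightarrow> bool" where
  "psi_smooth_on nk a b \<longleftrightarrow> (\<exists>K K'. piece_density K K' \<in> density_pieces nk
      \<and> (\<forall>t\<in>{a..b}. psi sG \<alpha> l m r nk t = gf \<alpha> t * K t) \<and> continuous_on {0..1} K
      \<and> (\<forall>s\<in>{a<..<b}. (K has_real_derivative K' s) (at s)))"

lemma psi_smooth_on_root:
  assumes "0 \<le> a" "b \<le> 1"
  shows "psi_smooth_on (0,0) a b"
  unfolding psi_smooth_on_def density_pieces_def
  using assms hh_has_real_derivative(1)[OF continuous_\<alpha>]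
  by (intro exI[of _ "\<lambda>t. hh sG \<alpha> 0 t * Lc sG \<alpha> l m r (0,0)"]
      exI[of _ "\<lambda>t. (ff sG \<alpha> t)^2 * Lc sG \<alpha> l m r (0,0)"] conjI)
    (auto simp: psi_def intro!: continuous_intros continuous_on_hh continuous_\<alpha>)

lemma psi_smooth_on_node:
  assumes k: "k < 2^N" and ab: "0 \<le> a" "a < b" "b \<le> 1"
    and gap: "l (Suc N) k \<notin> {a<..<b}" "m (Suc N) k \<notin> {a<..<b}" "r (Suc N) k \<notin> {a<..<b}"
  shows "psi_smooth_on (Suc N, k) a b"
proof -
  define lk mk rk where "lk = l (Suc N) k" and "mk = m (Suc N) k" and "rk = r (Suc N) k"
  define L R where "L = Lc sG \<alpha> l m r (Suc N, k)" and "R = Rc sG \<alpha> l m r (Suc N, k)"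
  have bd: "0 \<le> lk" "lk < mk" "mk < rk" "rk \<le> 1"
    using tile_midpoint_bounds[OF k] unfolding lk_def mk_def rk_def by auto
  have psi_eq: "psi sG \<alpha> l m r (Suc N, k) t = (if lk \<le> t \<and> t \<le> mk then gf \<alpha> t * (hh sG \<alpha> lk t * L)
      else if mk \<le> t \<and> t \<le> rk then gf \<alpha> t * (hh sG \<alpha> t rk * R) else 0)" for t
    unfolding psi_def lk_def mk_def rk_def L_def R_def by simp
  have "hh sG \<alpha> lk mk > 0" "hh sG \<alpha> mk rk > 0" using bd by (auto intro!: hh_pos[OF continuous_\<alpha>])
  then have continuous_at_mk: "hh sG \<alpha> lk mk * L = hh sG \<alpha> mk rk * R"
    unfolding L_def R_def Lc_def Rc_def lk_def mk_def rk_def using gf_pos[of \<alpha>] by simp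
  have sub: "{a<..<b} \<subseteq> {0<..<1}" using ab by auto
  have pieces: "piece_density (\<lambda>t. hh sG \<alpha> lk t * L) (\<lambda>t. (ff sG \<alpha> t)^2 * L) \<in> density_pieces (Suc N, k)"
    "piece_density (\<lambda>t. hh sG \<alpha> t rk * R) (\<lambda>t. - ((ff sG \<alpha> t)^2) * R) \<in> density_pieces (Suc N, k)"
    "piece_density (\<lambda>_. 0) (\<lambda>_. 0) \<in> density_pieces (Suc N, k)"
    unfolding density_pieces_def lk_def rk_def L_def R_def by auto
  consider "b \<le> lk \<or> rk \<le> a" | "lk \<le> a" "b \<le> mk" | "mk \<le> a" "b \<le> rk"
    using gap bd ab unfolding lk_def mk_def rk_def by force
  then show ?thesis
  proof cases
    case 1
    have "psi sG \<alpha> l m r (Suc N, k) t = gf \<alpha> t * 0" if "t \<in> {a..b}" for t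
      using 1 bd that by (cases "t = lk \<or> t = rk") (auto simp: psi_eq hh_same)
    then show ?thesis unfolding psi_smooth_on_def using pieces(3) by fastforce
  next
    case 2
    then have "\<forall>t\<in>{a..b}. psi sG \<alpha> l m r (Suc N, k) t = gf \<alpha> t * (hh sG \<alpha> lk t * L)"
      by (auto simp: psi_eq)
    then show ?thesis unfolding psi_smooth_on_def
      using pieces(1) sub hh_has_real_derivative(1)[OF continuous_\<alpha>]
      by (intro exI conjI) (auto intro!: continuous_intros continuous_on_hh continuous_\<alpha>)
  next
    case 3
    have "psi sG \<alpha> l m r (Suc N, k) t = gf \<alpha> t * (hh sG \<alpha> t rk * R)" if "t \<in> {a..b}" for t
      using 3 bd continuous_at_mk that by (cases "t = mk") (auto simp: psi_eq)
    then show ?thesis unfolding psi_smooth_on_def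
      using pieces(2) sub hh_has_real_derivative(2)[OF continuous_\<alpha>]
      by (intro exI conjI) (auto intro!: continuous_intros continuous_on_hh continuous_\<alpha>)
  qed
qed

lemma increment_on_smooth_interval:
  assumes "psi_smooth_on nk a b" "0 \<le> a" "a < b" "b \<le> 1"
  shows "\<exists>W\<in>density_pieces nk. (\<forall>s\<in>{a<..<b}. lifted_phi nk s = ff sG \<beta> s * W s)
      \<and> ((\<lambda>s. (ff sG \<beta> s)^2 * W s) has_integral increment \<beta> (psi sG \<alpha> l m r nk) a b) {a..b}"
proof -
  obtain K K' where "piece_density K K' \<in> density_pieces nk"
    "\<And>t. t \<in> {a..b} \<Longrightarrow> psi sG \<alpha> l m r nk t = gf \<alpha> t * K t" "continuous_on {0..1} K"
    "\<And>s. s \<in> {a<..<b} \<Longrightarrow> (K has_real_derivative K' s) (at s)"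
    using assms(1) unfolding psi_smooth_on_def by blast
  then show ?thesis
    using piece_density_of_smooth_piece[OF assms(2-4)] increment_has_integral_of_smooth_piece[OF assms(2-4)]
    by blast
qed

lemma psi_smooth_on_fine_tile:
  assumes nk: "nk \<in> idx" and N: "fst nk \<le> N" and k: "k < 2^N"
  shows "psi_smooth_on nk (l (Suc N) k) (r (Suc N) k)"
proof (cases "fst nk = 0")
  case True
  then have "nk = (0,0)" using nk unfolding idx_def by auto
  then show ?thesis using tile_bounds[OF k] psi_smooth_on_root by simp
next
  case False
  then obtain M j where nk_eq: "nk = (Suc M, j)" and j: "j < 2^M"
    using nk unfolding idx_def by (cases nk) (auto simp: gr0_conv_Suc)
  have "M \<le> N" "Suc M \<le> N" "2*j < 2^Suc M" using N j nk_eq by auto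
  moreover have "m (Suc M) j = r (Suc (Suc M)) (2*j)" using tile_split[OF j] by simp
  ultimately show ?thesis
    unfolding nk_eq using tile_bounds[OF k] coarser_endpoint_not_in_tile[OF _ j k]
      coarser_endpoint_not_in_tile[of "Suc M" N "2*j" k] k
    by (intro psi_smooth_on_node[OF j]) auto
qed

definition increment_density :: "nat \<times> nat \<Rightarrow> real \<Rightarrow> real" where
  "increment_density nk t = lifted_phi nk t / ff sG \<beta> t"

lemma increment_density_on_fine_tile:
  assumes "nk \<in> idx" "fst nk \<le> N" and k: "k < 2^N"
  obtains W where "W \<in> density_pieces nk"
    "\<And>s. s \<in> {l (Suc N) k<..<r (Suc N) k} \<Longrightarrow> increment_density nk s = W s"
    "((\<lambda>s. (ff sG \<beta> s)^2 * W s) has_integral increment \<beta> (psi sG \<alpha> l m r nk) (l (Suc N) k) (r (Suc N) k))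
      {l (Suc N) k..r (Suc N) k}"
proof -
  have bd: "0 \<le> l (Suc N) k" "l (Suc N) k < r (Suc N) k" "r (Suc N) k \<le> 1" using tile_bounds[OF k] by auto
  obtain W where W: "W \<in> density_pieces nk" "\<forall>s\<in>{l (Suc N) k<..<r (Suc N) k}. lifted_phi nk s = ff sG \<beta> s * W s"
    "((\<lambda>s. (ff sG \<beta> s)^2 * W s) has_integral increment \<beta> (psi sG \<alpha> l m r nk) (l (Suc N) k) (r (Suc N) k))
      {l (Suc N) k..r (Suc N) k}"
    using increment_on_smooth_interval[OF psi_smooth_on_fine_tile[OF assms] bd] by blast
  have "increment_density nk s = W s" if "s \<in> {l (Suc N) k<..<r (Suc N) k}" for s
    using W(2) that bd ff_pos[of s \<beta>] unfolding increment_density_def by simp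
  with W that show ?thesis by blast
qed

lemma tile_regular_increment_density:
  assumes nk: "nk \<in> idx"
  shows "tile_regular (increment_density nk)"
proof -
  obtain B where B: "\<forall>W\<in>density_pieces nk. \<forall>t\<in>{0..1}. \<bar>W t\<bar> \<le> B"
    using finite_family_bounded_on[OF finite_density_pieces[of nk] continuous_on_density_pieces[of _ nk]] by blast
  have "\<forall>\<^sub>F N in sequentially. level_controlled N e B (increment_density nk)" if e: "e > 0" for e
  proof -
    obtain d where d: "d > 0" "\<forall>W\<in>density_pieces nk. \<forall>s\<in>{0..1}. \<forall>t\<in>{0..1}. \<bar>s - t\<bar> < d \<longrightarrow> \<bar>W s - W t\<bar> < e"
      using finite_family_uniformly_continuous_on[OF finite_density_pieces[of nk] continuous_on_density_pieces[of _ nk] e] by blast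
    show ?thesis
      using eventually_conj[OF rho_power_eventually_less[OF d(1)] eventually_ge_at_top[of "fst nk"]]
    proof eventually_elim
      case (elim N)
      show ?case unfolding level_controlled_def
      proof (intro allI impI ballI)
        fix k s t assume k: "k < 2^N"
          and s: "s \<in> {l (Suc N) k<..<r (Suc N) k}" and t: "t \<in> {l (Suc N) k<..<r (Suc N) k}"
        obtain W where W: "W \<in> density_pieces nk"
          "\<And>s. s \<in> {l (Suc N) k<..<r (Suc N) k} \<Longrightarrow> increment_density nk s = W s"
          using increment_density_on_fine_tile[OF nk elim[THEN conjunct2] k] by blast
        have st: "s \<in> {0..1}" "t \<in> {0..1}" using s t tile_bounds[OF k] by auto
        have "\<bar>s - t\<bar> < r (Suc N) k - l (Suc N) k" using s t by auto
        also have "\<dots> \<le> \<rho>^N" by (rule tile_width[OF k])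
        finally have "\<bar>W s - W t\<bar> < e" using d(2) W(1) st elim by auto
        then show "\<bar>increment_density nk s - increment_density nk t\<bar> \<le> e \<and> \<bar>increment_density nk s\<bar> \<le> B"
          using W s t B st by auto
      qed
    qed
  qed
  then show ?thesis unfolding tile_regular_def by blast
qed

lemma psi_at_0:
  assumes "nk \<in> idx"
  shows "psi sG \<alpha> l m r nk 0 = 0"
proof (cases "fst nk = 0")
  case True
  then have "nk = (0,0)" using assms unfolding idx_def by auto
  then show ?thesis unfolding psi_def by (simp add: hh_same)
next
  case False
  then obtain N k where nk: "nk = (Suc N, k)" and k: "k < 2^N"
    using assms unfolding idx_def by (cases nk) (auto simp: gr0_conv_Suc)
  show ?thesis
  proof (cases "l (Suc N) k = 0")
    case True
    then show ?thesis using tile_midpoint_bounds[OF k] unfolding nk psi_def by (simp add: hh_same)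
  next
    case False
    then show ?thesis using tile_midpoint_bounds[OF k] unfolding nk psi_def by auto
  qed
qed

lemma increment_eq_tile_integral:
  assumes "nk \<in> idx" "fst nk \<le> N" "k < 2^N"
  shows "increment \<beta> (psi sG \<alpha> l m r nk) (l (Suc N) k) (r (Suc N) k)
      = integral {l (Suc N) k..r (Suc N) k} (\<lambda>t. (ff sG \<beta> t)^2 * increment_density nk t)"
proof -
  obtain W where W: "\<And>s. s \<in> {l (Suc N) k<..<r (Suc N) k} \<Longrightarrow> increment_density nk s = W s"
    "((\<lambda>s. (ff sG \<beta> s)^2 * W s) has_integral increment \<beta> (psi sG \<alpha> l m r nk) (l (Suc N) k) (r (Suc N) k))
      {l (Suc N) k..r (Suc N) k}"
    using increment_density_on_fine_tile[OF assms] by blast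
  have "((\<lambda>t. (ff sG \<beta> t)^2 * increment_density nk t) has_integral
      increment \<beta> (psi sG \<alpha> l m r nk) (l (Suc N) k) (r (Suc N) k)) {l (Suc N) k..r (Suc N) k}"
    by (rule has_integral_spike_finite[OF _ _ W(2), of "{l (Suc N) k, r (Suc N) k}"]) (use W(1) in auto)
  then show ?thesis by (rule integral_unique[symmetric])
qed

lemma integrable_weighted_increment_density:
  assumes nk: "nk \<in> idx"
  shows "(\<lambda>t. (ff sG \<beta> t)^2 * increment_density nk t) integrable_on {0..1}"
proof (rule integrable_on_unit_if_tilewise_continuous)
  fix k assume k: "k < (2::nat)^(fst nk)"
  obtain W where W: "W \<in> density_pieces nk"
    "\<And>s. s \<in> {l (Suc (fst nk)) k<..<r (Suc (fst nk)) k} \<Longrightarrow> increment_density nk s = W s"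
    using increment_density_on_fine_tile[OF nk order_refl k] by blast
  have "{l (Suc (fst nk)) k..r (Suc (fst nk)) k} \<subseteq> {0..1}" using tile_bounds[OF k] by auto
  then have "continuous_on {l (Suc (fst nk)) k..r (Suc (fst nk)) k} (\<lambda>t. (ff sG \<beta> t)^2 * W t)"
    by (intro continuous_on_mult continuous_on_subset[OF continuous_on_ff_sq[OF continuous_\<beta>]]
        continuous_on_subset[OF continuous_on_density_pieces[OF W(1)]])
  with W(2) show "\<exists>G. continuous_on {l (Suc (fst nk)) k..r (Suc (fst nk)) k} G
      \<and> (\<forall>s\<in>{l (Suc (fst nk)) k<..<r (Suc (fst nk)) k}. (ff sG \<beta> s)^2 * increment_density nk s = G s)"
    by auto
qed

lemma integrable_weighted_increment_density_product:
  assumes nk: "nk \<in> idx" and pq: "pq \<in> idx"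
  shows "(\<lambda>t. (ff sG \<beta> t)^2 * (increment_density nk t * increment_density pq t)) integrable_on {0..1}"
proof (rule integrable_on_unit_if_tilewise_continuous)
  let ?N = "max (fst nk) (fst pq)"
  fix k assume k: "k < (2::nat)^?N"
  obtain W where W: "W \<in> density_pieces nk"
    "\<And>s. s \<in> {l (Suc ?N) k<..<r (Suc ?N) k} \<Longrightarrow> increment_density nk s = W s"
    using increment_density_on_fine_tile[OF nk _ k] by auto
  obtain V where V: "V \<in> density_pieces pq"
    "\<And>s. s \<in> {l (Suc ?N) k<..<r (Suc ?N) k} \<Longrightarrow> increment_density pq s = V s"
    using increment_density_on_fine_tile[OF pq _ k] by auto
  have "{l (Suc ?N) k..r (Suc ?N) k} \<subseteq> {0..1}" using tile_bounds[OF k] by auto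
  then have "continuous_on {l (Suc ?N) k..r (Suc ?N) k} (\<lambda>t. (ff sG \<beta> t)^2 * (W t * V t))"
    by (intro continuous_on_mult continuous_on_subset[OF continuous_on_ff_sq[OF continuous_\<beta>]]
        continuous_on_subset[OF continuous_on_density_pieces[OF W(1)]]
        continuous_on_subset[OF continuous_on_density_pieces[OF V(1)]])
  with W(2) V(2) show "\<exists>G. continuous_on {l (Suc ?N) k..r (Suc ?N) k} G
      \<and> (\<forall>s\<in>{l (Suc ?N) k<..<r (Suc ?N) k}.
            (ff sG \<beta> s)^2 * (increment_density nk s * increment_density pq s) = G s)"
    by auto
qed

lemma sum_Delta_psi_products_tendsto:
  assumes nk: "nk \<in> idx" and pq: "pq \<in> idx"
  shows "(\<lambda>N. \<Sum>ij\<in>idx_upto N. Delta sG \<beta> l m r ij (psi sG \<alpha> l m r nk) * Delta sG \<beta> l m r ij (psi sG \<alpha> l m r pq))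
     \<longlonglongrightarrow> integral {0..1} (\<lambda>t. lifted_phi nk t * lifted_phi pq t)"
proof -
  let ?q = "\<lambda>t. (ff sG \<beta> t)^2"
  let ?I = "\<lambda>N k F. integral {l (Suc N) k..r (Suc N) k} F"
  have q_pos: "?q t > 0" if "t \<in> {0..1}" for t using ff_pos[OF that, of \<beta>] by simp
  have "(\<lambda>N. \<Sum>k<2^N. ?I N k (\<lambda>t. ?q t * increment_density nk t) * ?I N k (\<lambda>t. ?q t * increment_density pq t)
      / ?I N k ?q) \<longlonglongrightarrow> integral {0..1} (\<lambda>t. ?q t * (increment_density nk t * increment_density pq t))"
    by (intro tile_ratio_sums_tendsto continuous_on_ff_sq continuous_\<beta> q_pos
        integrable_weighted_increment_density integrable_weighted_increment_density_product
        tile_regular_increment_density nk pq)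
  moreover have "\<forall>\<^sub>F N in sequentially. (\<Sum>k<2^N. ?I N k (\<lambda>t. ?q t * increment_density nk t)
      * ?I N k (\<lambda>t. ?q t * increment_density pq t) / ?I N k ?q)
    = (\<Sum>ij\<in>idx_upto N. Delta sG \<beta> l m r ij (psi sG \<alpha> l m r nk) * Delta sG \<beta> l m r ij (psi sG \<alpha> l m r pq))"
    using eventually_ge_at_top[of "max (fst nk) (fst pq)"]
  proof eventually_elim
    case (elim N)
    have "?I N k (\<lambda>t. ?q t * increment_density nk t) * ?I N k (\<lambda>t. ?q t * increment_density pq t) / ?I N k ?q
      = increment \<beta> (psi sG \<alpha> l m r nk) (l (Suc N) k) (r (Suc N) k)
        * increment \<beta> (psi sG \<alpha> l m r pq) (l (Suc N) k) (r (Suc N) k) / hh sG \<beta> (l (Suc N) k) (r (Suc N) k)"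
      if k: "k < 2^N" for k
      using increment_eq_tile_integral[OF nk _ k] increment_eq_tile_integral[OF pq _ k] elim
        hh_eq_integral[OF continuous_\<beta>, of "l (Suc N) k" "r (Suc N) k"] tile_bounds[OF k] by simp
    then show ?case
      unfolding sum_Delta_products_idx_upto[of \<beta> "psi sG \<alpha> l m r nk" "psi sG \<alpha> l m r pq",
          OF continuous_\<beta> psi_at_0[OF nk] psi_at_0[OF pq]]
      by (intro sum.cong) auto
  qed
  moreover have "integral {0..1} (\<lambda>t. ?q t * (increment_density nk t * increment_density pq t))
      = integral {0..1} (\<lambda>t. lifted_phi nk t * lifted_phi pq t)"
  proof (rule integral_cong)
    fix t :: real assume "t \<in> {0..1}"
    then have "ff sG \<beta> t > 0" by (rule ff_pos)
    then show "?q t * (increment_density nk t * increment_density pq t) = lifted_phi nk t * lifted_phi pq t"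
      by (simp add: increment_density_def power2_eq_square)
  qed
  ultimately show ?thesis using Lim_transform_eventually by fastforce
qed

end

theorem lemma7:
  fixes \<alpha> \<beta> sG :: "real \<Rightarrow> real" and \<rho> :: real and l m r :: "nat \<Rightarrow> nat \<Rightarrow> real"
    and nk pq :: "nat \<times> nat"
  assumes "holder01 \<alpha>" and "holder01 \<beta>" and "holder01 sG"
    and "\<forall>t\<in>{0..1}. sG t > 0"
    and "nested_partition \<rho> l m r"
    and "nk \<in> idx" and "pq \<in> idx"
  shows "((\<lambda>ij. Gm sG \<alpha> \<beta> l m r ij nk * Gm sG \<alpha> \<beta> l m r ij pq) has_sum
     integral {0..1} (\<lambda>t.
        (phi sG \<alpha> l m r nk t + (\<alpha> t - \<beta> t) / sG t * psi sG \<alpha> l m r nk t) *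
        (phi sG \<alpha> l m r pq t + (\<alpha> t - \<beta> t) / sG t * psi sG \<alpha> l m r pq t))) idx"
proof -
  interpret lift_setting \<rho> l m r sG \<alpha> \<beta>
    using assms holder01_imp_continuous_on by unfold_locales auto
  show ?thesis
    unfolding Gm_def
    using has_sum_idx_from_partial_sums[OF sum_Delta_psi_products_tendsto[OF assms(6,6)]
        sum_Delta_psi_products_tendsto[OF assms(7,7)] sum_Delta_psi_products_tendsto[OF assms(6,7)]]
    unfolding lifted_phi_def .
qed

end
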